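(* Let $\Gamma=(G,\sigma)$ be a signed graph with vertex set $V_G = V_1\sqcup V_2\sqcup V$, where $|V_1|=|V_2|=m\ge 1$ and $|V|=d$. Assume: (1) there is an integer $\ell$ such that $d^{\pm}_1(v)-d^{\pm}_2(v)=\ell$ for every $v\in V_1$ and $d^{\pm}_2(u)-d^{\pm}_1(u)=\ell$ for every $u\in V_2$; (2) every $v\in V$ satisfies one of: (a) $d^+_1(v)=m$ and $d^-_1(v)=d^+_2(v)=d^-_2(v)=0$, or the same with the roles of $V_1,V_2$ exchanged; (b) $d^-_1(v)=m$ and $d^+_1(v)=d^+_2(v)=d^-_2(v)=0$, or the same with the roles of $V_1,V_2$ exchanged; (c) $d^{\pm}_1(v)=d^{\pm}_2(v)$; (d) $d^+_1(v)=d^-_2(v)=m$, or the same with the roles of $V_1,V_2$ exchanged. Define $\Gamma'$ on the same vertex set by keeping all edges with both endpoints in $V_1\cup V_2$ or both in $V$, and, for each $v\in V$: in case (a), deleting the $m$ positive edges from $v$ to $V_1$ (resp. $V_2$) and joining $v$ by positive edges to all vertices of $V_2$ (resp. $V_1$); in case (b), deleting the $m$ negative edges from $v$ to $V_1$ (resp. $V_2$) and joining $v$ by negative edges to all vertices of $V_2$ (resp. $V_1$); in case (c), leaving the edges from $v$ unchanged; in case (d), reversing the sign of all $2m$ edges from $v$ to $V_1\cup V_2$ (so $v$ becomes joined negatively to the part it was joined to positively, and positively to the other). Then $\Gamma$ and $\Gamma'$ are cospectral.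
   Context: A signed graph $\Gamma=(G,\sigma)$ is a simple finite graph $G=(V_G,E_G)$ with a map $\sigma:E_G\to\{+1,-1\}$. Its adjacency matrix $A_\Gamma=(a_{uv})$ is the symmetric matrix with $a_{uv}=\sigma(uv)$ if $u,v$ are adjacent and $a_{uv}=0$ otherwise; two signed graphs are cospectral if their adjacency matrices have the same characteristic polynomial. For a vertex $v$ and $i\in\{1,2\}$, $d^+_i(v)$ (resp. $d^-_i(v)$) is the number of positive (resp. negative) edges joining $v$ to vertices of $V_i$, and $d^{\pm}_i(v)=d^+_i(v)-d^-_i(v)$. *)

theory Defs
  imports "Jordan_Normal_Form.Char_Poly"
begin

(* A signed graph on the vertex set {0..<n}: sg u v = sigma(uv) if uv is an edge,
   sg u v = 0 otherwise. *)
definition signed_graph :: "nat \<Rightarrow> (nat \<Rightarrow> nat \<Rightarrow> int) \<Rightarrow> bool" where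
  "signed_graph n sg \<longleftrightarrow>
     (\<forall>u v. sg u v \<in> {-1, 0, 1}) \<and> (\<forall>u v. sg u v = sg v u) \<and> (\<forall>u. sg u u = 0)
     \<and> (\<forall>u v. (u \<ge> n \<or> v \<ge> n) \<longrightarrow> sg u v = 0)"

definition adj_mat :: "nat \<Rightarrow> (nat \<Rightarrow> nat \<Rightarrow> int) \<Rightarrow> int mat" where
  "adj_mat n sg = mat n n (\<lambda>(i, j). sg i j)"

definition cospectral :: "nat \<Rightarrow> (nat \<Rightarrow> nat \<Rightarrow> int) \<Rightarrow> (nat \<Rightarrow> nat \<Rightarrow> int) \<Rightarrow> bool" where
  "cospectral n sg sg' \<longleftrightarrow> char_poly (adj_mat n sg) = char_poly (adj_mat n sg')"

definition dplus :: "nat set \<Rightarrow> (nat \<Rightarrow> nat \<Rightarrow> int) \<Rightarrow> nat \<Rightarrow> nat" where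
  "dplus S sg v = card {u \<in> S. sg v u = 1}"

definition dminus :: "nat set \<Rightarrow> (nat \<Rightarrow> nat \<Rightarrow> int) \<Rightarrow> nat \<Rightarrow> nat" where
  "dminus S sg v = card {u \<in> S. sg v u = -1}"

definition dpm :: "nat set \<Rightarrow> (nat \<Rightarrow> nat \<Rightarrow> int) \<Rightarrow> nat \<Rightarrow> int" where
  "dpm S sg v = int (dplus S sg v) - int (dminus S sg v)"

definition case_a :: "nat set \<Rightarrow> nat set \<Rightarrow> nat \<Rightarrow> (nat \<Rightarrow> nat \<Rightarrow> int) \<Rightarrow> nat \<Rightarrow> bool" where
  "case_a A B m sg v \<longleftrightarrow> dplus A sg v = m \<and> dminus A sg v = 0 \<and> dplus B sg v = 0 \<and> dminus B sg v = 0"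

definition case_b :: "nat set \<Rightarrow> nat set \<Rightarrow> nat \<Rightarrow> (nat \<Rightarrow> nat \<Rightarrow> int) \<Rightarrow> nat \<Rightarrow> bool" where
  "case_b A B m sg v \<longleftrightarrow> dminus A sg v = m \<and> dplus A sg v = 0 \<and> dplus B sg v = 0 \<and> dminus B sg v = 0"

definition case_c :: "nat set \<Rightarrow> nat set \<Rightarrow> (nat \<Rightarrow> nat \<Rightarrow> int) \<Rightarrow> nat \<Rightarrow> bool" where
  "case_c A B sg v \<longleftrightarrow> dpm A sg v = dpm B sg v"

definition case_d :: "nat set \<Rightarrow> nat set \<Rightarrow> nat \<Rightarrow> (nat \<Rightarrow> nat \<Rightarrow> int) \<Rightarrow> nat \<Rightarrow> bool" where
  "case_d A B m sg v \<longleftrightarrow> dplus A sg v = m \<and> dminus B sg v = m"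

end

theory Submission
  imports Defs
begin

text \<open>
  Let \<open>w = 1\<^sub>V\<^sub>1 - 1\<^sub>V\<^sub>2\<close>, so \<open>w \<bullet> w = 2m\<close>, and let \<open>Q = I - w w\<^sup>T / m\<close> be the reflection
  in the hyperplane orthogonal to \<open>w\<close>; \<open>Q\<close> is an involution, so \<open>Q A Q\<close> is similar to \<open>A\<close>.
  Conjugation by \<open>Q\<close> leaves the block on \<open>V\<close> alone, and condition (1) says that \<open>A w = \<ell> w\<close>
  on \<open>V\<^sub>1 \<union> V\<^sub>2\<close>, which makes the block on \<open>V\<^sub>1 \<union> V\<^sub>2\<close> invariant as well. For \<open>v \<in> V\<close> the row of
  \<open>v\<close> towards \<open>V\<^sub>1 \<union> V\<^sub>2\<close> changes by \<open>-(A w)\<^sub>v w\<^sup>T / m\<close>: in case (c) \<open>(A w)\<^sub>v = 0\<close>, and in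
  cases (a), (b), (d) the row is constant on \<open>V\<^sub>1\<close> and on \<open>V\<^sub>2\<close> and the update swaps the two
  constants. This is exactly the rewiring producing \<open>\<Gamma>'\<close>, so \<open>A\<^sub>\<Gamma>\<^sub>' = Q A\<^sub>\<Gamma> Q\<close>.
\<close>

text \<open>For \<open>w = 0\<close> the division by zero makes this the identity matrix.\<close>

definition reflection_mat :: "nat \<Rightarrow> (nat \<Rightarrow> 'a::field) \<Rightarrow> 'a mat" where
  "reflection_mat n w =
     mat n n (\<lambda>(i, j). of_bool (i = j) - 2 * w i * w j / (\<Sum>k = 0..<n. w k * w k))"

lemma reflection_mat_carrier [simp]: "reflection_mat n w \<in> carrier_mat n n"
  by (simp add: reflection_mat_def)

lemma sum_of_bool_eq_minus_mult:
  fixes f :: "nat \<Rightarrow> 'a::comm_ring_1"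
  assumes "i < n"
  shows "(\<Sum>k = 0..<n. (of_bool (i = k) - c * g k) * f k) = f i - c * (\<Sum>k = 0..<n. g k * f k)"
proof -
  have "{0..<n} \<inter> {k. i = k} = {i}" using assms by auto
  then show ?thesis by (simp add: left_diff_distrib sum_subtractf sum_distrib_left mult.assoc)
qed

lemma index_reflection_mult_mat:
  assumes "A \<in> carrier_mat n n" "i < n" "j < n"
  shows "(reflection_mat n w * A) $$ (i, j) =
           A $$ (i, j) - 2 * w i / (\<Sum>k = 0..<n. w k * w k) * (\<Sum>k = 0..<n. w k * A $$ (k, j))"
proof -
  have "(reflection_mat n w * A) $$ (i, j) =
          (\<Sum>k = 0..<n. (of_bool (i = k) - 2 * w i / (\<Sum>k = 0..<n. w k * w k) * w k) * A $$ (k, j))"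
    using assms by (simp add: reflection_mat_def scalar_prod_def)
  also have "\<dots> = A $$ (i, j) - 2 * w i / (\<Sum>k = 0..<n. w k * w k) * (\<Sum>k = 0..<n. w k * A $$ (k, j))"
    using assms(2) by (rule sum_of_bool_eq_minus_mult)
  finally show ?thesis .
qed

lemma index_mult_reflection_mat:
  assumes "A \<in> carrier_mat n n" "i < n" "j < n"
  shows "(A * reflection_mat n w) $$ (i, j) =
           A $$ (i, j) - 2 * w j / (\<Sum>k = 0..<n. w k * w k) * (\<Sum>k = 0..<n. w k * A $$ (i, k))"
proof -
  have "(A * reflection_mat n w) $$ (i, j) =
          (\<Sum>k = 0..<n. (of_bool (j = k) - 2 * w j / (\<Sum>k = 0..<n. w k * w k) * w k) * A $$ (i, k))"
    using assms by (simp add: reflection_mat_def scalar_prod_def mult_ac eq_commute[of j])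
  also have "\<dots> = A $$ (i, j) - 2 * w j / (\<Sum>k = 0..<n. w k * w k) * (\<Sum>k = 0..<n. w k * A $$ (i, k))"
    using assms(3) by (rule sum_of_bool_eq_minus_mult)
  finally show ?thesis .
qed

lemma reflection_mat_reflects:
  assumes "(\<Sum>k = 0..<n. w k * w k) \<noteq> 0" "i < n"
  shows "(\<Sum>k = 0..<n. w k * reflection_mat n w $$ (k, i)) = - w i"
proof -
  have "(\<Sum>k = 0..<n. w k * reflection_mat n w $$ (k, i)) =
          (\<Sum>k = 0..<n. (of_bool (i = k) - 2 * w i / (\<Sum>k = 0..<n. w k * w k) * w k) * w k)"
    using assms by (intro sum.cong) (auto simp: reflection_mat_def mult.commute)
  also have "\<dots> = w i - 2 * w i / (\<Sum>k = 0..<n. w k * w k) * (\<Sum>k = 0..<n. w k * w k)"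
    using assms(2) by (rule sum_of_bool_eq_minus_mult)
  finally show ?thesis using assms by simp
qed

lemma reflection_mat_involutive:
  assumes "(\<Sum>k = 0..<n. w k * w k) \<noteq> 0"
  shows "reflection_mat n w * reflection_mat n w = 1\<^sub>m n"
proof (rule eq_matI)
  fix i j assume "i < dim_row (1\<^sub>m n)" "j < dim_col (1\<^sub>m n)"
  then have "i < n" "j < n" by auto
  then show "(reflection_mat n w * reflection_mat n w) $$ (i, j) = 1\<^sub>m n $$ (i, j)"
    using assms by (simp add: index_reflection_mult_mat reflection_mat_reflects)
      (simp add: reflection_mat_def)
qed (simp_all add: reflection_mat_def)

lemma index_reflection_conj:
  fixes A :: "'a::field mat" and w :: "nat \<Rightarrow> 'a"
  assumes A: "A \<in> carrier_mat n n" and "i < n" "j < n"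
  defines "s \<equiv> \<Sum>k = 0..<n. w k * w k"
  shows "(reflection_mat n w * A * reflection_mat n w) $$ (i, j) =
           A $$ (i, j) - 2 * w i / s * (\<Sum>k = 0..<n. w k * A $$ (k, j))
             - 2 * w j / s * (\<Sum>k = 0..<n. w k * A $$ (i, k))
             + 4 * w i * w j / s\<^sup>2 * (\<Sum>k = 0..<n. \<Sum>l = 0..<n. w l * A $$ (l, k) * w k)"
proof -
  let ?Q = "reflection_mat n w"
  let ?t = "\<Sum>k = 0..<n. \<Sum>l = 0..<n. w l * A $$ (l, k) * w k"
  have QA: "?Q * A \<in> carrier_mat n n" by (rule mult_carrier_mat[OF reflection_mat_carrier A])
  have wQA: "(\<Sum>k = 0..<n. w k * (?Q * A) $$ (i, k)) =
               (\<Sum>k = 0..<n. w k * A $$ (i, k)) - 2 * w i / s * ?t"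
    using assms by (simp add: index_reflection_mult_mat s_def right_diff_distrib sum_subtractf
        sum_distrib_left sum_distrib_right mult_ac flip: s_def)
  have "(?Q * A * ?Q) $$ (i, j) =
          (?Q * A) $$ (i, j) - 2 * w j / s * (\<Sum>k = 0..<n. w k * (?Q * A) $$ (i, k))"
    using assms QA by (simp add: index_mult_reflection_mat)
  also have "\<dots> = A $$ (i, j) - 2 * w i / s * (\<Sum>k = 0..<n. w k * A $$ (k, j))
                   - 2 * w j / s * ((\<Sum>k = 0..<n. w k * A $$ (i, k)) - 2 * w i / s * ?t)"
    unfolding wQA using assms by (simp add: index_reflection_mult_mat)
  finally show ?thesis
    by (simp add: divide_inverse power2_eq_square inverse_mult_distrib algebra_simps)
qed

lemma similar_mat_reflection_conj:
  assumes "A \<in> carrier_mat n n" "(\<Sum>k = 0..<n. w k * w k) \<noteq> 0"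
  shows "similar_mat (reflection_mat n w * A * reflection_mat n w) A"
proof -
  let ?Q = "reflection_mat n w"
  have "similar_mat_wit (?Q * A * ?Q) A ?Q ?Q"
  proof (rule similar_mat_witI)
    show "?Q * A * ?Q \<in> carrier_mat n n"
      using assms(1) reflection_mat_carrier by (metis mult_carrier_mat)
  qed (use assms reflection_mat_involutive in auto)
  then show ?thesis unfolding similar_mat_def by blast
qed

lemma cospectral_if_similar_over_rat:
  assumes "similar_mat (map_mat rat_of_int (adj_mat n sg')) (map_mat rat_of_int (adj_mat n sg))"
  shows "cospectral n sg sg'"
proof -
  have hom: "char_poly (map_mat rat_of_int (adj_mat n f)) = of_int_poly (char_poly (adj_mat n f))" for f
    by (rule of_int_hom.char_poly_hom[where n = n]) (simp add: adj_mat_def)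
  have "of_int_poly (char_poly (adj_mat n sg')) = (of_int_poly (char_poly (adj_mat n sg)) :: rat poly)"
    using char_poly_similar[OF assms] by (simp only: hom)
  then show ?thesis
    unfolding cospectral_def by (simp add: of_int_poly_hom.injectivity)
qed

text \<open>
  The identity below is \<open>sg' = Q sg Q\<close> written out entrywise, using \<open>w \<bullet> w = 2c\<close>,
  \<open>d = sg w\<close> and \<open>w\<^sup>T sg w = 2 c l\<close>.
\<close>

lemma cospectral_if_switching_identity:
  fixes sg sg' :: "nat \<Rightarrow> nat \<Rightarrow> int" and w d :: "nat \<Rightarrow> int"
  assumes sym: "\<And>u v. sg u v = sg v u"
    and norm: "(\<Sum>k = 0..<n. w k * w k) = 2 * int c" and "c \<noteq> 0"
    and d: "\<And>i. i < n \<Longrightarrow> d i = (\<Sum>k = 0..<n. w k * sg i k)"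
    and dw: "\<And>k. k < n \<Longrightarrow> d k * w k = l * (w k * w k)"
    and entry: "\<And>i j. i < n \<Longrightarrow> j < n \<Longrightarrow>
      int c * sg' i j = int c * sg i j - d i * w j - w i * d j + 2 * l * w i * w j"
  shows "cospectral n sg sg'"
proof -
  let ?w = "\<lambda>k. rat_of_int (w k)"
  let ?A = "map_mat rat_of_int (adj_mat n sg)"
  let ?Q = "reflection_mat n ?w"
  have A: "?A \<in> carrier_mat n n" by (simp add: adj_mat_def)
  have s: "(\<Sum>k = 0..<n. ?w k * ?w k) = 2 * of_nat c"
    using arg_cong[OF norm, of rat_of_int] by simp
  have row: "(\<Sum>k = 0..<n. ?w k * ?A $$ (i, k)) = of_int (d i)" if "i < n" for i
    using that by (simp add: d adj_mat_def)
  have col: "(\<Sum>k = 0..<n. ?w k * ?A $$ (k, j)) = of_int (d j)" if "j < n" for j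
    using that by (simp add: d adj_mat_def sym[of _ j])
  have "(\<Sum>k = 0..<n. d k * w k) = (\<Sum>k = 0..<n. l * (w k * w k))"
    by (rule sum.cong) (simp_all add: dw)
  then have dw_sum: "(\<Sum>k = 0..<n. d k * w k) = 2 * int c * l"
    by (simp add: norm flip: sum_distrib_left)
  have "(\<Sum>k = 0..<n. \<Sum>l = 0..<n. ?w l * ?A $$ (l, k) * ?w k)
          = (\<Sum>k = 0..<n. (\<Sum>l = 0..<n. ?w l * ?A $$ (l, k)) * ?w k)"
    by (simp add: sum_distrib_right)
  also have "\<dots> = 2 * of_nat c * of_int l"
    using arg_cong[OF dw_sum, of rat_of_int] by (simp add: col)
  finally have t: "(\<Sum>k = 0..<n. \<Sum>l = 0..<n. ?w l * ?A $$ (l, k) * ?w k) = 2 * of_nat c * of_int l" .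
  have "map_mat rat_of_int (adj_mat n sg') = ?Q * ?A * ?Q"
  proof (rule eq_matI)
    fix i j assume "i < dim_row (?Q * ?A * ?Q)" "j < dim_col (?Q * ?A * ?Q)"
    then have ij: "i < n" "j < n" by (simp_all add: reflection_mat_def)
    have "(?Q * ?A * ?Q) $$ (i, j) = of_int (sg i j) - 2 * ?w i / (2 * of_nat c) * of_int (d j)
            - 2 * ?w j / (2 * of_nat c) * of_int (d i)
            + 4 * ?w i * ?w j / (2 * of_nat c)\<^sup>2 * (2 * of_nat c * of_int l)"
      unfolding index_reflection_conj[OF A ij] s row[OF ij(1)] col[OF ij(2)] t
      using ij by (simp add: adj_mat_def)
    also have "\<dots> = of_int (sg i j)
        - (of_int (d i) * ?w j + ?w i * of_int (d j) - 2 * of_int l * ?w i * ?w j) / of_nat c"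
      using \<open>c \<noteq> 0\<close> by (simp add: power2_eq_square field_simps)
    also have "\<dots> = of_int (sg' i j)"
      using arg_cong[OF entry[OF ij], of rat_of_int] \<open>c \<noteq> 0\<close> by (simp add: field_simps)
    finally show "map_mat rat_of_int (adj_mat n sg') $$ (i, j) = (?Q * ?A * ?Q) $$ (i, j)"
      using ij by (simp add: adj_mat_def)
  qed (simp_all add: reflection_mat_def adj_mat_def)
  moreover have "similar_mat (?Q * ?A * ?Q) ?A"
    using \<open>c \<noteq> 0\<close> by (intro similar_mat_reflection_conj[OF A]) (simp add: s)
  ultimately show ?thesis by (simp add: cospectral_if_similar_over_rat)
qed

definition part_sign :: "nat set \<Rightarrow> nat set \<Rightarrow> nat \<Rightarrow> int" where
  "part_sign A B u = of_bool (u \<in> A) - of_bool (u \<in> B)"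

lemma sum_part_sign_mult:
  fixes f :: "nat \<Rightarrow> int"
  assumes "finite S" "A \<subseteq> S" "B \<subseteq> S"
  shows "(\<Sum>k\<in>S. part_sign A B k * f k) = sum f A - sum f B"
  using assms by (simp add: part_sign_def left_diff_distrib sum_subtractf inf.absorb2)

lemma sum_part_sign_square:
  assumes "finite S" "A \<subseteq> S" "B \<subseteq> S" "A \<inter> B = {}"
  shows "(\<Sum>k\<in>S. part_sign A B k * part_sign A B k) = int (card A + card B)"
proof -
  have "sum (part_sign A B) A = sum (\<lambda>_. 1) A"
    by (rule sum.cong) (use assms(4) in \<open>auto simp: part_sign_def\<close>)
  moreover have "sum (part_sign A B) B = sum (\<lambda>_. -1) B"
    by (rule sum.cong) (use assms(4) in \<open>auto simp: part_sign_def\<close>)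
  ultimately show ?thesis by (simp add: sum_part_sign_mult[OF assms(1-3)])
qed

lemma sum_row_eq_dpm:
  assumes "finite S" "\<forall>u. sg v u \<in> {-1, 0, 1}"
  shows "sum (sg v) S = dpm S sg v"
proof -
  have "sg v u = of_bool (sg v u = 1) - of_bool (sg v u = -1)" for u
    using assms(2) by auto
  then have "sum (sg v) S = (\<Sum>u\<in>S. of_bool (sg v u = 1) - of_bool (sg v u = -1))"
    by (intro sum.cong) auto
  with assms(1) show ?thesis
    by (simp add: sum_subtractf dpm_def dplus_def dminus_def Int_def conj_commute)
qed

lemma card_filter_eq_card_iff:
  assumes "finite S"
  shows "card {u \<in> S. P u} = card S \<longleftrightarrow> (\<forall>u\<in>S. P u)"
proof
  assume "card {u \<in> S. P u} = card S"
  then have "{u \<in> S. P u} = S" using assms by (intro card_subset_eq) auto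
  then show "\<forall>u\<in>S. P u" by auto
next
  assume "\<forall>u\<in>S. P u"
  then have "{u \<in> S. P u} = S" by auto
  then show "card {u \<in> S. P u} = card S" by simp
qed

lemma dplus_dminus_eq_0_iff:
  assumes "finite S" "\<forall>u. sg v u \<in> {-1, 0, 1}"
  shows "dplus S sg v = 0 \<and> dminus S sg v = 0 \<longleftrightarrow> (\<forall>u\<in>S. sg v u = 0)"
proof -
  have "dplus S sg v = 0 \<longleftrightarrow> (\<forall>u\<in>S. sg v u \<noteq> 1)" "dminus S sg v = 0 \<longleftrightarrow> (\<forall>u\<in>S. sg v u \<noteq> -1)"
    using assms(1) by (auto simp: dplus_def dminus_def)
  with assms(2) show ?thesis by fastforce
qed

text \<open>
  Cases (a), (b) and (d) of the switching are the rows that are constant on each of the two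
  parts and whose two constants get exchanged.
\<close>

definition swapped_row ::
    "nat set \<Rightarrow> nat set \<Rightarrow> (nat \<Rightarrow> nat \<Rightarrow> int) \<Rightarrow> (nat \<Rightarrow> nat \<Rightarrow> int) \<Rightarrow> nat \<Rightarrow> bool" where
  "swapped_row A B sg sg' v \<longleftrightarrow>
     (\<exists>a b. (\<forall>u\<in>A. sg v u = a \<and> sg' v u = b) \<and> (\<forall>u\<in>B. sg v u = b \<and> sg' v u = a))"

lemma swapped_row_commute: "swapped_row A B sg sg' v \<longleftrightarrow> swapped_row B A sg sg' v"
  unfolding swapped_row_def by blast

lemma swapped_row_if_switching_case:
  assumes fin: "finite A" "finite B" and card: "card A = m" "card B = m"
    and signed: "\<forall>u. sg v u \<in> {-1, 0, 1}"
    and ra: "case_a A B m sg v \<Longrightarrow> (\<forall>u\<in>A. sg' v u = 0) \<and> (\<forall>u\<in>B. sg' v u = 1)"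
    and rb: "case_b A B m sg v \<Longrightarrow> (\<forall>u\<in>A. sg' v u = 0) \<and> (\<forall>u\<in>B. sg' v u = -1)"
    and rd: "case_d A B m sg v \<Longrightarrow> \<forall>u\<in>A \<union> B. sg' v u = - sg v u"
    and "case_a A B m sg v \<or> case_b A B m sg v \<or> case_d A B m sg v"
  shows "swapped_row A B sg sg' v"
  using \<open>case_a A B m sg v \<or> case_b A B m sg v \<or> case_d A B m sg v\<close>
proof (elim disjE)
  assume "case_a A B m sg v"
  with ra fin card signed show ?thesis
    using dplus_dminus_eq_0_iff[of B sg v] card_filter_eq_card_iff[of A "\<lambda>u. sg v u = 1"]
    unfolding swapped_row_def case_a_def dplus_def by auto
next
  assume "case_b A B m sg v"
  with rb fin card signed show ?thesis
    using dplus_dminus_eq_0_iff[of B sg v] card_filter_eq_card_iff[of A "\<lambda>u. sg v u = -1"]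
    unfolding swapped_row_def case_b_def dminus_def by auto
next
  assume "case_d A B m sg v"
  with rd fin card show ?thesis
    using card_filter_eq_card_iff[of A "\<lambda>u. sg v u = 1"] card_filter_eq_card_iff[of B "\<lambda>u. sg v u = -1"]
    unfolding swapped_row_def case_d_def dplus_def dminus_def by auto
qed

lemma swapped_row_switching:
  assumes "swapped_row A B sg sg' v" "A \<inter> B = {}" "card A = m" "card B = m" "u \<in> A \<union> B"
  shows "int m * sg' v u = int m * sg v u - (sum (sg v) A - sum (sg v) B) * part_sign A B u"
proof -
  obtain a b where A: "\<forall>u\<in>A. sg v u = a \<and> sg' v u = b" and B: "\<forall>u\<in>B. sg v u = b \<and> sg' v u = a"
    using assms(1) unfolding swapped_row_def by blast
  have "sum (sg v) A = int m * a" "sum (sg v) B = int m * b"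
    using A B assms(3,4) by simp_all
  with A B assms(2,5) show ?thesis
    by (auto simp: part_sign_def algebra_simps)
qed

lemma switching_row_identity:
  assumes fin: "finite V1" "finite V2" and disj: "V1 \<inter> V2 = {}"
    and card: "card V1 = m" "card V2 = m" and signed: "\<forall>u. sg v u \<in> {-1, 0, 1}"
    and cases: "case_a V1 V2 m sg v \<or> case_a V2 V1 m sg v
                \<or> case_b V1 V2 m sg v \<or> case_b V2 V1 m sg v
                \<or> case_c V1 V2 sg v \<or> case_d V1 V2 m sg v \<or> case_d V2 V1 m sg v"
    and ra1: "case_a V1 V2 m sg v \<Longrightarrow> (\<forall>u\<in>V1. sg' v u = 0) \<and> (\<forall>u\<in>V2. sg' v u = 1)"
    and ra2: "case_a V2 V1 m sg v \<Longrightarrow> (\<forall>u\<in>V2. sg' v u = 0) \<and> (\<forall>u\<in>V1. sg' v u = 1)"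
    and rb1: "case_b V1 V2 m sg v \<Longrightarrow> (\<forall>u\<in>V1. sg' v u = 0) \<and> (\<forall>u\<in>V2. sg' v u = -1)"
    and rb2: "case_b V2 V1 m sg v \<Longrightarrow> (\<forall>u\<in>V2. sg' v u = 0) \<and> (\<forall>u\<in>V1. sg' v u = -1)"
    and rc: "case_c V1 V2 sg v \<Longrightarrow> \<forall>u\<in>V1 \<union> V2. sg' v u = sg v u"
    and rd: "case_d V1 V2 m sg v \<or> case_d V2 V1 m sg v \<Longrightarrow> \<forall>u\<in>V1 \<union> V2. sg' v u = - sg v u"
    and u: "u \<in> V1 \<union> V2"
  shows "int m * sg' v u = int m * sg v u - (sum (sg v) V1 - sum (sg v) V2) * part_sign V1 V2 u"
proof (cases "case_c V1 V2 sg v")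
  case True
  then show ?thesis
    using rc u sum_row_eq_dpm[of V1 sg v] sum_row_eq_dpm[of V2 sg v] fin signed
    by (simp add: case_c_def)
next
  case False
  have "swapped_row V1 V2 sg sg' v"
    if "case_a V1 V2 m sg v \<or> case_b V1 V2 m sg v \<or> case_d V1 V2 m sg v"
    using ra1 rb1 rd by (intro swapped_row_if_switching_case[OF fin card signed _ _ _ that]) auto
  moreover have "swapped_row V2 V1 sg sg' v"
    if "case_a V2 V1 m sg v \<or> case_b V2 V1 m sg v \<or> case_d V2 V1 m sg v"
    using ra2 rb2 rd
    by (intro swapped_row_if_switching_case[OF fin(2,1) card(2,1) signed _ _ _ that])
      (auto simp: Un_commute)
  ultimately have "swapped_row V1 V2 sg sg' v"
    using cases False by (auto simp: swapped_row_commute)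
  then show ?thesis by (rule swapped_row_switching[OF _ disj card u])
qed

lemma switching_entry_identity:
  fixes sg sg' :: "nat \<Rightarrow> nat \<Rightarrow> int" and w d :: "nat \<Rightarrow> int"
  assumes sym: "\<And>u v. sg u v = sg v u" and sym': "\<And>u v. sg' u v = sg' v u"
    and keepU: "\<forall>u\<in>U. \<forall>v\<in>U. sg' u v = sg u v" and keepV: "\<forall>u\<in>V. \<forall>v\<in>V. sg' u v = sg u v"
    and dU: "\<forall>u\<in>U. d u = l * w u" and wV: "\<forall>v\<in>V. w v = 0"
    and rowV: "\<forall>v\<in>V. \<forall>u\<in>U. c * sg' v u = c * sg v u - d v * w u"
    and "i \<in> U \<union> V" "j \<in> U \<union> V"
  shows "c * sg' i j = c * sg i j - d i * w j - w i * d j + 2 * l * w i * w j"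
  using \<open>i \<in> U \<union> V\<close>
proof
  assume i: "i \<in> U"
  show ?thesis
    using \<open>j \<in> U \<union> V\<close>
  proof
    assume "j \<in> U"
    with i show ?thesis by (simp add: keepU dU algebra_simps)
  next
    assume "j \<in> V"
    with i rowV wV show ?thesis by (simp add: sym[of i j] sym'[of i j])
  qed
next
  assume i: "i \<in> V"
  with \<open>j \<in> U \<union> V\<close> rowV keepV wV show ?thesis by auto
qed

theorem theorem5p1:
  fixes n m d :: nat and V1 V2 V :: "nat set" and sg sg' :: "nat \<Rightarrow> nat \<Rightarrow> int"
  assumes G: "signed_graph n sg"
    and part: "V1 \<union> V2 \<union> V = {0..<n}"
    and disj: "V1 \<inter> V2 = {}" "V1 \<inter> V = {}" "V2 \<inter> V = {}"
    and card: "card V1 = m" "card V2 = m" "m \<ge> 1" "card V = d"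
    and cond1: "\<exists>l::int. (\<forall>v\<in>V1. dpm V1 sg v - dpm V2 sg v = l)
                        \<and> (\<forall>u\<in>V2. dpm V2 sg u - dpm V1 sg u = l)"
    and cond2: "\<forall>v\<in>V. case_a V1 V2 m sg v \<or> case_a V2 V1 m sg v
                    \<or> case_b V1 V2 m sg v \<or> case_b V2 V1 m sg v
                    \<or> case_c V1 V2 sg v
                    \<or> case_d V1 V2 m sg v \<or> case_d V2 V1 m sg v"
    and G': "signed_graph n sg'"
    and keep12: "\<forall>u\<in>V1 \<union> V2. \<forall>w\<in>V1 \<union> V2. sg' u w = sg u w"
    and keepV: "\<forall>u\<in>V. \<forall>w\<in>V. sg' u w = sg u w"
    and ra1: "\<forall>v\<in>V. case_a V1 V2 m sg v \<longrightarrow>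
                 (\<forall>u\<in>V1. sg' v u = 0) \<and> (\<forall>u\<in>V2. sg' v u = 1)"
    and ra2: "\<forall>v\<in>V. case_a V2 V1 m sg v \<longrightarrow>
                 (\<forall>u\<in>V2. sg' v u = 0) \<and> (\<forall>u\<in>V1. sg' v u = 1)"
    and rb1: "\<forall>v\<in>V. case_b V1 V2 m sg v \<longrightarrow>
                 (\<forall>u\<in>V1. sg' v u = 0) \<and> (\<forall>u\<in>V2. sg' v u = -1)"
    and rb2: "\<forall>v\<in>V. case_b V2 V1 m sg v \<longrightarrow>
                 (\<forall>u\<in>V2. sg' v u = 0) \<and> (\<forall>u\<in>V1. sg' v u = -1)"
    and rc: "\<forall>v\<in>V. case_c V1 V2 sg v \<longrightarrow> (\<forall>u\<in>V1 \<union> V2. sg' v u = sg v u)"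
    and rd: "\<forall>v\<in>V. (case_d V1 V2 m sg v \<or> case_d V2 V1 m sg v) \<longrightarrow>
                 (\<forall>u\<in>V1 \<union> V2. sg' v u = - sg v u)"
  shows "cospectral n sg sg'"
proof -
  have signed: "\<forall>u. sg v u \<in> {-1, 0, 1}" for v using G by (simp add: signed_graph_def)
  have sym: "sg u v = sg v u" "sg' u v = sg' v u" for u v
    using G G' by (simp_all add: signed_graph_def)
  have sub: "V1 \<subseteq> {0..<n}" "V2 \<subseteq> {0..<n}" using part by auto
  have fin: "finite V1" "finite V2" using card by (auto intro: card_ge_0_finite)
  obtain l where l1: "\<forall>v\<in>V1. dpm V1 sg v - dpm V2 sg v = l"
    and l2: "\<forall>u\<in>V2. dpm V2 sg u - dpm V1 sg u = l" using cond1 by blast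
  define w where "w = part_sign V1 V2"
  define dif where "dif v = sum (sg v) V1 - sum (sg v) V2" for v
  have dif_sum: "dif i = (\<Sum>k = 0..<n. w k * sg i k)" for i
    unfolding w_def dif_def by (rule sum_part_sign_mult[OF _ sub, symmetric]) simp
  have dif_U: "dif u = l * w u" if "u \<in> V1 \<union> V2" for u
    using that l1 l2 disj(1) sum_row_eq_dpm[of V1 sg u] sum_row_eq_dpm[of V2 sg u] fin signed[of u]
    by (auto simp: dif_def w_def part_sign_def)
  have w_V: "w v = 0" if "v \<in> V" for v using that disj by (auto simp: w_def part_sign_def)
  have row_V: "int m * sg' v u = int m * sg v u - dif v * w u" if "v \<in> V" "u \<in> V1 \<union> V2" for v u
    unfolding dif_def w_def using that cond2 ra1 ra2 rb1 rb2 rc rd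
    by (intro switching_row_identity[OF fin disj(1) card(1,2) signed]) auto
  have "(\<Sum>k = 0..<n. w k * w k) = 2 * int m"
    using sum_part_sign_square[OF _ sub disj(1)] card by (simp add: w_def)
  moreover have "dif k * w k = l * (w k * w k)" if "k < n" for k
    using that part dif_U w_V by fastforce
  moreover have "int m * sg' i j = int m * sg i j - dif i * w j - w i * dif j + 2 * l * w i * w j"
    if "i < n" "j < n" for i j
    using that part sym keep12 keepV dif_U row_V w_V
    by (intro switching_entry_identity[where U = "V1 \<union> V2" and V = V]) auto
  ultimately show ?thesis
    using card(3) dif_sum sym
    by (intro cospectral_if_switching_identity[where w = w and d = dif and l = l]) auto
qed

end
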